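(* Let $0<k<1$, $\gamma>0$, $\delta>1$, and $Z=\{(\tau,s)\in\mathcal C:g(\tau,s)=0\}$. (W) If $1<\delta<\Phi$ and $\gamma>\gamma_-(\delta)$, then $Z=\emptyset$. (X) If $1<\delta<\Phi$ and $\gamma_+(\delta)<\gamma<\gamma_-(\delta)$, then there are $0<\tau_1<\tau_2<1$ such that $Z\cap(\{\tau\}\times S^1)$ has exactly two points for $\tau\in(\tau_1,\tau_2)$, is the single point $(\tau,3\pi/2)$ for $\tau\in\{\tau_1,\tau_2\}$, and is empty otherwise; $(\tau_1,3\pi/2)$ is a supercritical and $(\tau_2,3\pi/2)$ a subcritical fold point; $Z$ is a simple closed curve that is contractible in $\mathcal C$. (Y) If $1<\delta<\Phi$ and $0<\gamma<\gamma_+(\delta)$, then there are $0<a_1<a_2<a_3<a_4<1$ such that $Z\cap(\{\tau\}\times S^1)$ has exactly two points for $\tau\in(a_1,a_2)\cup(a_3,a_4)$, is the single point $(a_1,3\pi/2)$, $(a_2,\pi/2)$, $(a_3,\pi/2)$, $(a_4,3\pi/2)$ for $\tau=a_1,a_2,a_3,a_4$ respectively, and is empty otherwise; these four points are fold points, supercritical at $a_1,a_3$ and subcritical at $a_2,a_4$; $Z$ is the union of two disjoint simple closed curves, each non-contractible in $\mathcal C$. (Z) If $\delta>\Phi$, then there are $0<b_1<b_2<1$ such that $Z\cap(\{\tau\}\times S^1)$ has exactly two points for $\tau\in(b_1,b_2)$, is the single point $(b_1,\pi/2)$, resp. $(b_2,3\pi/2)$, for $\tau=b_1$, resp. $b_2$,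 and is empty otherwise; $(b_1,\pi/2)$ is a supercritical and $(b_2,3\pi/2)$ a subcritical fold point; $Z$ is a simple closed curve non-contractible in $\mathcal C$.
   Context: Let $S^1=\mathbb R/2\pi\mathbb Z$ and $\mathcal C=\{(\tau,s):0<\tau\le1,\ s\in S^1\}$. Let $p(\delta)=-\delta^2+\delta+1$, $\Phi=(1+\sqrt5)/2$. For parameters $\delta>1$, $\gamma>0$, $k>0$ define $g:\mathcal C\to\mathbb R$, $g(\tau,s)=\tau^{\delta^2}+\gamma\tau^{\delta^2-\delta}(1+k\sin s)-\tau$; thus $g(\tau,s)=0$ iff $\gamma(1+k\sin s)=\mathcal F_\delta(\tau)$, where $\mathcal F_\delta(\tau)=\tau^{p(\delta)}-\tau^\delta$. For $1<\delta<\Phi$, $M_{\mathcal F}(\delta)=\max_{(0,1]}\mathcal F_\delta>0$, $\gamma_+(\delta)=M_{\mathcal F}(\delta)/(1+k)$ and (for $k<1$) $\gamma_-(\delta)=M_{\mathcal F}(\delta)/(1-k)$. A fold point is a point $(\tau_0,s_0)\in\mathcal C$ with $g(\tau_0,s_0)=0$ and $\partial g/\partial s(\tau_0,s_0)=0$. It is supercritical if there is a neighbourhood $U$ of $(\tau_0,s_0)$ such that for $\tau>\tau_0$ close to $\tau_0$ the set $\{s:(\tau,s)\in U,\ g(\tau,s)=0\}$ has exactly two elements, for $\tau=\tau_0$ exactly one, and for $\tau<\tau_0$ close to $\tau_0$ none; subcritical if the same holds with the roles of $\tau>\tau_0$ and $\tau<\tau_0$ interchanged. *)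

theory Defs
  imports "HOL-Analysis.Analysis"
begin

text \<open>The circle S^1 = R/2piZ is modelled as the unit circle in the complex plane,
  the class of s being cis s. The cylinder C = (0,1] x S^1 is a subset of real x complex.\<close>

definition Phi :: real where "Phi = (1 + sqrt 5) / 2"

definition pdelta :: "real \<Rightarrow> real" where "pdelta \<delta> = 1 + \<delta> - \<delta>^2"

definition cyl :: "(real \<times> complex) set" where
  "cyl = {(\<tau>, z). 0 < \<tau> \<and> \<tau> \<le> 1 \<and> z \<in> sphere 0 1}"

text \<open>g(tau,s) for real representatives s of points of S^1 (2pi-periodic in s).\<close>
definition gfun :: "real \<Rightarrow> real \<Rightarrow> real \<Rightarrow> real \<Rightarrow> real \<Rightarrow> real" where
  "gfun \<delta> \<gamma> k \<tau> s = \<tau> powr (\<delta>^2) + \<gamma> * \<tau> powr (\<delta>^2 - \<delta>) * (1 + k * sin s) - \<tau>"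

definition FF :: "real \<Rightarrow> real \<Rightarrow> real" where
  "FF \<delta> \<tau> = \<tau> powr (pdelta \<delta>) - \<tau> powr \<delta>"

definition MF :: "real \<Rightarrow> real" where
  "MF \<delta> = Sup (FF \<delta> ` {0<..1})"

definition gamma_plus :: "real \<Rightarrow> real \<Rightarrow> real" where
  "gamma_plus k \<delta> = MF \<delta> / (1 + k)"

definition gamma_minus :: "real \<Rightarrow> real \<Rightarrow> real" where
  "gamma_minus k \<delta> = MF \<delta> / (1 - k)"

definition Zset :: "real \<Rightarrow> real \<Rightarrow> real \<Rightarrow> (real \<times> complex) set" where
  "Zset \<delta> \<gamma> k = {(\<tau>, cis s) | \<tau> s. 0 < \<tau> \<and> \<tau> \<le> 1 \<and> gfun \<delta> \<gamma> k \<tau> s = 0}"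

definition fibre :: "real \<Rightarrow> real \<Rightarrow> real \<Rightarrow> real \<Rightarrow> complex set" where
  "fibre \<delta> \<gamma> k \<tau> = {z. (\<tau>, z) \<in> Zset \<delta> \<gamma> k}"

definition fold_point :: "real \<Rightarrow> real \<Rightarrow> real \<Rightarrow> real \<Rightarrow> real \<Rightarrow> bool" where
  "fold_point \<delta> \<gamma> k \<tau>0 s0 \<longleftrightarrow> 0 < \<tau>0 \<and> \<tau>0 \<le> 1 \<and> gfun \<delta> \<gamma> k \<tau>0 s0 = 0 \<and>
     ((\<lambda>s. gfun \<delta> \<gamma> k \<tau>0 s) has_real_derivative 0) (at s0)"

definition supercritical :: "real \<Rightarrow> real \<Rightarrow> real \<Rightarrow> real \<Rightarrow> real \<Rightarrow> bool" where
  "supercritical \<delta> \<gamma> k \<tau>0 s0 \<longleftrightarrow>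
     (\<exists>U. open U \<and> (\<tau>0, cis s0) \<in> U \<and> (\<exists>\<epsilon>>0. \<forall>\<tau>.
        (\<tau>0 < \<tau> \<and> \<tau> < \<tau>0 + \<epsilon> \<longrightarrow> card {z. (\<tau>, z) \<in> U \<inter> Zset \<delta> \<gamma> k} = 2) \<and>
        (\<tau> = \<tau>0 \<longrightarrow> card {z. (\<tau>, z) \<in> U \<inter> Zset \<delta> \<gamma> k} = 1) \<and>
        (\<tau>0 - \<epsilon> < \<tau> \<and> \<tau> < \<tau>0 \<longrightarrow> {z. (\<tau>, z) \<in> U \<inter> Zset \<delta> \<gamma> k} = {})))"

definition subcritical :: "real \<Rightarrow> real \<Rightarrow> real \<Rightarrow> real \<Rightarrow> real \<Rightarrow> bool" where
  "subcritical \<delta> \<gamma> k \<tau>0 s0 \<longleftrightarrow>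
     (\<exists>U. open U \<and> (\<tau>0, cis s0) \<in> U \<and> (\<exists>\<epsilon>>0. \<forall>\<tau>.
        (\<tau>0 - \<epsilon> < \<tau> \<and> \<tau> < \<tau>0 \<longrightarrow> card {z. (\<tau>, z) \<in> U \<inter> Zset \<delta> \<gamma> k} = 2) \<and>
        (\<tau> = \<tau>0 \<longrightarrow> card {z. (\<tau>, z) \<in> U \<inter> Zset \<delta> \<gamma> k} = 1) \<and>
        (\<tau>0 < \<tau> \<and> \<tau> < \<tau>0 + \<epsilon> \<longrightarrow> {z. (\<tau>, z) \<in> U \<inter> Zset \<delta> \<gamma> k} = {})))"

definition simple_loop :: "(real \<Rightarrow> 'a::topological_space) \<Rightarrow> bool" where
  "simple_loop p \<longleftrightarrow> simple_path p \<and> pathfinish p = pathstart p"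

definition simple_closed_curve :: "'a::real_normed_vector set \<Rightarrow> bool" where
  "simple_closed_curve A \<longleftrightarrow> (\<exists>p. simple_loop p \<and> path_image p = A)"

definition contractible_loop_in :: "'a::real_normed_vector set \<Rightarrow> (real \<Rightarrow> 'a) \<Rightarrow> bool" where
  "contractible_loop_in S p \<longleftrightarrow> (\<exists>a. homotopic_loops S p (\<lambda>_. a))"

definition curve_contractible_in :: "'a::real_normed_vector set \<Rightarrow> 'a set \<Rightarrow> bool" where
  "curve_contractible_in S A \<longleftrightarrow>
     (\<forall>p. simple_loop p \<and> path_image p = A \<longrightarrow> contractible_loop_in S p)"

definition curve_noncontractible_in :: "'a::real_normed_vector set \<Rightarrow> 'a set \<Rightarrow> bool" where
  "curve_noncontractible_in S A \<longleftrightarrow>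
     (\<forall>p. simple_loop p \<and> path_image p = A \<longrightarrow> \<not> contractible_loop_in S p)"

end

theory Submission
  imports Defs "HOL-Complex_Analysis.Complex_Analysis"
begin

text \<open>Write \<open>c(\<tau>) = (F\<^sub>\<delta>(\<tau>)/\<gamma> - 1)/k\<close> (\<open>sin_level\<close> below). The fibre of \<open>Z\<close> over
  \<open>\<tau> \<in> (0,1]\<close> consists of the points of the circle with \<open>Im z = c(\<tau>)\<close>: two points if
  \<open>\<bar>c(\<tau>)\<bar> < 1\<close>, the single point \<open>\<plusminus>\<i>\<close> (where \<open>\<partial>g/\<partial>s\<close> vanishes) if \<open>c(\<tau>) = \<plusminus>1\<close>,
  none otherwise. For \<open>1 < \<delta> < \<Phi>\<close> the exponent \<open>p(\<delta>)\<close> is positive and \<open>F\<^sub>\<delta>\<close> rises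
  strictly from \<open>0\<close> to \<open>M\<^sub>F\<close> and falls strictly back to \<open>F\<^sub>\<delta>(1) = 0\<close>, so each level
  \<open>\<plusminus>1\<close> below \<open>max c\<close> is crossed exactly twice, and the position of \<open>max c\<close> relative to
  \<open>\<plusminus>1\<close> is precisely the comparison of \<open>\<gamma>\<close> with \<open>\<gamma>\<^sub>\<plusminus>\<close>. For \<open>\<delta> > \<Phi>\<close>, \<open>p(\<delta>) < 0\<close>
  and \<open>F\<^sub>\<delta>\<close> decreases strictly from \<open>+\<infinity>\<close> to \<open>0\<close>, crossing each level once.

  Over an interval on which \<open>\<bar>c\<bar> \<le> 1\<close> with \<open>\<bar>c\<bar> = 1\<close> exactly at the ends, \<open>Z\<close> is the
  union of the two graphs \<open>Re z = \<plusminus>sqrt (1 - c\<^sup>2)\<close>, a simple closed curve. When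
  \<open>c < 1\<close> throughout, the curve misses the line \<open>z = \<i>\<close> and contracts in the cylinder; when
  \<open>c\<close> runs monotonically from \<open>-1\<close> to \<open>1\<close>, the projection to the circle is injective onto
  it, so the loop winds once around the cylinder.\<close>

section \<open>Level crossings of monotone and unimodal functions\<close>

lemma strict_mono_on_level_crossing:
  fixes f :: "real \<Rightarrow> real"
  assumes "continuous_on {a..b} f" "strict_mono_on {a..b} f" "a \<le> b" "f a \<le> L" "L \<le> f b"
  obtains x where "x \<in> {a..b}" "\<And>t. t \<in> {a..b} \<Longrightarrow> f t < L \<longleftrightarrow> t < x"
    "\<And>t. t \<in> {a..b} \<Longrightarrow> f t = L \<longleftrightarrow> t = x"
proof -
  obtain x where x: "a \<le> x" "x \<le> b" "f x = L" using IVT'[OF assms(4,5,3,1)] by blast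
  have "(f t < L \<longleftrightarrow> t < x) \<and> (f t = L \<longleftrightarrow> t = x)" if "t \<in> {a..b}" for t
    using strict_mono_onD[OF assms(2), of t x] strict_mono_onD[OF assms(2), of x t] that x
    by (cases t x rule: linorder_cases) auto
  with x that show thesis by auto
qed

lemma strict_antimono_on_uminus: "strict_antimono_on A f \<Longrightarrow> strict_mono_on A (\<lambda>x. - f x :: real)"
  by (auto simp: monotone_on_def)

lemma unimodal_level_crossings:
  fixes f :: "real \<Rightarrow> real"
  assumes cont: "continuous_on {0<..1} f" and m: "0 < m" "m < 1"
    and inc: "strict_mono_on {0<..m} f" and dec: "strict_antimono_on {m..1} f"
    and t0: "0 < t0" "t0 < m" "f t0 < L" and "L < f m" "f 1 < L"
  obtains l r where "0 < l" "l < m" "m < r" "r < 1"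
    "\<And>t. t \<in> {0<..1} \<Longrightarrow> f t < L \<longleftrightarrow> t < l \<or> r < t"
    "\<And>t. t \<in> {0<..1} \<Longrightarrow> f t = L \<longleftrightarrow> t = l \<or> t = r"
proof -
  have "{t0..m} \<subseteq> {0<..1}" "{t0..m} \<subseteq> {0<..m}" using assms by auto
  with assms have "continuous_on {t0..m} f" "strict_mono_on {t0..m} f" "t0 \<le> m" "f t0 \<le> L" "L \<le> f m"
    by (auto intro: continuous_on_subset[OF cont] monotone_on_subset[OF inc])
  then obtain l where l: "l \<in> {t0..m}" "\<And>t. t \<in> {t0..m} \<Longrightarrow> f t < L \<longleftrightarrow> t < l"
      "\<And>t. t \<in> {t0..m} \<Longrightarrow> f t = L \<longleftrightarrow> t = l"
    by (rule strict_mono_on_level_crossing) blast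
  have "{m..1} \<subseteq> {0<..1}" using assms by auto
  with assms have "continuous_on {m..1} (\<lambda>t. - f t)" "strict_mono_on {m..1} (\<lambda>t. - f t)"
    "m \<le> 1" "- f m \<le> - L" "- L \<le> - f 1"
    by (auto intro: continuous_on_minus continuous_on_subset[OF cont] strict_antimono_on_uminus[OF dec])
  then obtain r where r: "r \<in> {m..1}" "\<And>t. t \<in> {m..1} \<Longrightarrow> - f t < - L \<longleftrightarrow> t < r"
      "\<And>t. t \<in> {m..1} \<Longrightarrow> - f t = - L \<longleftrightarrow> t = r"
    by (rule strict_mono_on_level_crossing) blast
  have lm: "t0 < l" "l < m" using l(3)[of t0] l(3)[of m] l(1) assms by force+
  have rm: "m < r" "r < 1" using r(3)[of m] r(3)[of 1] r(1) assms by force+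
  have crossings: "(f t < L \<longleftrightarrow> t < l \<or> r < t) \<and> (f t = L \<longleftrightarrow> t = l \<or> t = r)"
    if t: "t \<in> {0<..1}" for t
  proof (cases "t < t0")
    case True
    with t t0 have "f t < L" using strict_mono_onD[OF inc, of t t0] by auto
    with True lm rm show ?thesis by auto
  next
    case False
    show ?thesis
    proof (cases "t \<le> m")
      case True with False l lm rm show ?thesis by auto
    next
      case False
      with t have "L < f t \<longleftrightarrow> t < r" "f t = L \<longleftrightarrow> t = r" using r by auto
      with False lm rm show ?thesis by (auto simp: not_less_iff_gr_or_eq)
    qed
  qed
  from lm rm t0 have "0 < l" "l < m" "m < r" "r < 1" by auto
  with crossings show thesis using that by blast
qed

lemma strict_antimono_level_crossing:
  fixes f :: "real \<Rightarrow> real"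
  assumes cont: "continuous_on {0<..1} f" and dec: "strict_antimono_on {0<..1} f"
    and t0: "0 < t0" "t0 < 1" "L < f t0" and "f 1 < L"
  obtains b where "0 < b" "b < 1" "\<And>t. t \<in> {0<..1} \<Longrightarrow> f t < L \<longleftrightarrow> b < t"
    "\<And>t. t \<in> {0<..1} \<Longrightarrow> f t = L \<longleftrightarrow> t = b"
proof -
  have "{t0..1} \<subseteq> {0<..1}" using assms by auto
  with assms have "continuous_on {t0..1} (\<lambda>t. - f t)" "strict_mono_on {t0..1} (\<lambda>t. - f t)"
    "t0 \<le> 1" "- f t0 \<le> - L" "- L \<le> - f 1"
    by (auto intro: continuous_on_minus continuous_on_subset[OF cont]
        strict_antimono_on_uminus monotone_on_subset[OF dec])
  then obtain b where b: "b \<in> {t0..1}" "\<And>t. t \<in> {t0..1} \<Longrightarrow> - f t < - L \<longleftrightarrow> t < b"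
      "\<And>t. t \<in> {t0..1} \<Longrightarrow> - f t = - L \<longleftrightarrow> t = b"
    by (rule strict_mono_on_level_crossing) blast
  have b01: "t0 < b" "b < 1" using b(3)[of t0] b(3)[of 1] b(1) assms by force+
  have crossing: "(f t < L \<longleftrightarrow> b < t) \<and> (f t = L \<longleftrightarrow> t = b)" if t: "t \<in> {0<..1}" for t
  proof (cases "t < t0")
    case True
    with t t0 have "L < f t" using monotone_onD[OF dec, of t t0] by auto
    with True b01 show ?thesis by auto
  next
    case False
    with t have "L < f t \<longleftrightarrow> t < b" "f t = L \<longleftrightarrow> t = b" using b by auto
    then show ?thesis by (auto simp: not_less_iff_gr_or_eq)
  qed
  from b01 t0 have "0 < b" "b < 1" by auto
  with crossing show thesis using that by blast
qed

section \<open>Shape of \<open>FF\<close>\<close>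

lemma Phi_gt_1: "1 < Phi"
  unfolding Phi_def using real_sqrt_less_iff[of 1 5] by simp

lemma pdelta_pos: "1 < \<delta> \<Longrightarrow> \<delta> < Phi \<Longrightarrow> 0 < pdelta \<delta>"
  and pdelta_neg: "Phi < \<delta> \<Longrightarrow> pdelta \<delta> < 0"
  and pdelta_less: "1 < \<delta> \<Longrightarrow> pdelta \<delta> < \<delta>"
proof -
  have p: "pdelta \<delta> = (5 - (2*\<delta> - 1)^2) / 4" unfolding pdelta_def by (simp add: power2_eq_square algebra_simps)
  show "0 < pdelta \<delta>" if "1 < \<delta>" "\<delta> < Phi"
  proof -
    have "(2*\<delta> - 1)^2 < (sqrt 5)^2" using that unfolding Phi_def by (intro power_strict_mono) auto
    thus ?thesis unfolding p by simp
  qed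
  show "pdelta \<delta> < 0" if "Phi < \<delta>"
  proof -
    have "(sqrt 5)^2 < (2*\<delta> - 1)^2" using that unfolding Phi_def by (intro power_strict_mono) auto
    thus ?thesis unfolding p by simp
  qed
  show "pdelta \<delta> < \<delta>" if "1 < \<delta>"
    using that less_1_mult[OF that that] unfolding pdelta_def by (simp add: power2_eq_square)
qed



lemma FF_has_real_derivative:
  assumes "0 < t"
  shows "(FF \<delta> has_real_derivative
           t powr (pdelta \<delta> - 1) * (pdelta \<delta> - \<delta> * t powr (\<delta> - pdelta \<delta>))) (at t)"
proof -
  have "t powr (\<delta> - 1) = t powr (pdelta \<delta> - 1) * t powr (\<delta> - pdelta \<delta>)"
    using assms by (simp add: powr_add[symmetric])
  moreover have "(FF \<delta> has_real_derivative
           pdelta \<delta> * t powr (pdelta \<delta> - 1) - \<delta> * t powr (\<delta> - 1)) (at t)"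
    unfolding FF_def[abs_def] using assms by (intro DERIV_diff has_real_derivative_powr)
  ultimately show ?thesis by (simp add: algebra_simps)
qed

lemma continuous_on_FF: "continuous_on {0<..} (FF \<delta>)"
  by (intro continuous_at_imp_continuous_on ballI DERIV_isCont[OF FF_has_real_derivative]) auto

lemma FF_1 [simp]: "FF \<delta> 1 = 0"
  by (simp add: FF_def)

definition FF_argmax :: "real \<Rightarrow> real" where
  "FF_argmax \<delta> = (pdelta \<delta> / \<delta>) powr (1 / (\<delta> - pdelta \<delta>))"

context
  fixes \<delta> :: real
  assumes \<delta>: "1 < \<delta>" "\<delta> < Phi"
begin

lemma FF_argmax_pos: "0 < FF_argmax \<delta>"
  and FF_argmax_less_1: "FF_argmax \<delta> < 1"
  and FF_argmax_powr: "FF_argmax \<delta> powr (\<delta> - pdelta \<delta>) = pdelta \<delta> / \<delta>"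
proof -
  have p: "0 < pdelta \<delta>" "pdelta \<delta> < \<delta>" using pdelta_pos[OF \<delta>] pdelta_less[OF \<delta>(1)] by auto
  then have q: "0 < pdelta \<delta> / \<delta>" "pdelta \<delta> / \<delta> < 1" by auto
  show "0 < FF_argmax \<delta>" unfolding FF_argmax_def using q p by simp
  have "FF_argmax \<delta> < 1 powr (1 / (\<delta> - pdelta \<delta>))" unfolding FF_argmax_def
    using q p by (intro powr_less_mono2) auto
  then show "FF_argmax \<delta> < 1" by simp
  show "FF_argmax \<delta> powr (\<delta> - pdelta \<delta>) = pdelta \<delta> / \<delta>" unfolding FF_argmax_def
    using q p by (simp add: powr_powr)
qed

lemma FF_derivative_factor_pos_iff:
  assumes "0 < t"
  shows "0 < pdelta \<delta> - \<delta> * t powr (\<delta> - pdelta \<delta>) \<longleftrightarrow> t < FF_argmax \<delta>"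
    and "pdelta \<delta> - \<delta> * t powr (\<delta> - pdelta \<delta>) < 0 \<longleftrightarrow> FF_argmax \<delta> < t"
proof -
  define e where "e = \<delta> - pdelta \<delta>"
  have e: "0 < e" using pdelta_less[OF \<delta>(1)] by (simp add: e_def)
  have eq: "pdelta \<delta> - \<delta> * t powr e = \<delta> * (FF_argmax \<delta> powr e - t powr e)"
    using FF_argmax_powr \<delta> by (simp add: algebra_simps e_def)
  have "t powr e < FF_argmax \<delta> powr e \<longleftrightarrow> t < FF_argmax \<delta>"
    "FF_argmax \<delta> powr e < t powr e \<longleftrightarrow> FF_argmax \<delta> < t"
    using e assms FF_argmax_pos
    by (auto intro: powr_less_mono2 dest: powr_less_cancel2[rotated 3])
  moreover have "0 < \<delta>" using \<delta> by simp
  ultimately show "0 < pdelta \<delta> - \<delta> * t powr (\<delta> - pdelta \<delta>) \<longleftrightarrow> t < FF_argmax \<delta>"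
    and "pdelta \<delta> - \<delta> * t powr (\<delta> - pdelta \<delta>) < 0 \<longleftrightarrow> FF_argmax \<delta> < t"
    unfolding e_def[symmetric] eq by (simp_all add: zero_less_mult_iff mult_less_0_iff)
qed

lemma strict_mono_on_FF: "strict_mono_on {0<..FF_argmax \<delta>} (FF \<delta>)"
proof (intro monotone_onI)
  fix x y :: real assume xy: "x \<in> {0<..FF_argmax \<delta>}" "y \<in> {0<..FF_argmax \<delta>}" "x < y"
  show "FF \<delta> x < FF \<delta> y"
  proof (rule DERIV_pos_imp_increasing_open[OF \<open>x < y\<close>])
    fix z assume "x < z" "z < y"
    with xy have "0 < z" "z < FF_argmax \<delta>" by auto
    then have "0 < pdelta \<delta> - \<delta> * z powr (\<delta> - pdelta \<delta>)"
      using FF_derivative_factor_pos_iff(1) by blast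
    with \<open>0 < z\<close> have "0 < z powr (pdelta \<delta> - 1) * (pdelta \<delta> - \<delta> * z powr (\<delta> - pdelta \<delta>))"
      by simp
    with \<open>0 < z\<close> show "\<exists>d. (FF \<delta> has_real_derivative d) (at z) \<and> 0 < d"
      using FF_has_real_derivative by blast
  next
    show "continuous_on {x..y} (FF \<delta>)"
      by (rule continuous_on_subset[OF continuous_on_FF]) (use xy in auto)
  qed
qed

lemma strict_antimono_on_FF: "strict_antimono_on {FF_argmax \<delta>..} (FF \<delta>)"
proof (intro monotone_onI)
  fix x y :: real assume xy: "x \<in> {FF_argmax \<delta>..}" "y \<in> {FF_argmax \<delta>..}" "x < y"
  show "FF \<delta> y < FF \<delta> x"
  proof (rule DERIV_neg_imp_decreasing_open[OF \<open>x < y\<close>])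
    fix z assume "x < z" "z < y"
    with xy FF_argmax_pos have "0 < z" "FF_argmax \<delta> < z" by auto
    then have "pdelta \<delta> - \<delta> * z powr (\<delta> - pdelta \<delta>) < 0"
      using FF_derivative_factor_pos_iff(2) by blast
    with \<open>0 < z\<close> have "z powr (pdelta \<delta> - 1) * (pdelta \<delta> - \<delta> * z powr (\<delta> - pdelta \<delta>)) < 0"
      by (simp add: mult_pos_neg)
    with \<open>0 < z\<close> show "\<exists>d. (FF \<delta> has_real_derivative d) (at z) \<and> d < 0"
      using FF_has_real_derivative by blast
  next
    show "continuous_on {x..y} (FF \<delta>)"
      by (rule continuous_on_subset[OF continuous_on_FF]) (use xy FF_argmax_pos in auto)
  qed
qed


lemma FF_le_FF_argmax:
  assumes "0 < t"
  shows "FF \<delta> t \<le> FF \<delta> (FF_argmax \<delta>)"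
proof (cases "t \<le> FF_argmax \<delta>")
  case True
  with assms show ?thesis
    using strict_mono_onD[OF strict_mono_on_FF, of t "FF_argmax \<delta>"] FF_argmax_pos
    by (cases "t = FF_argmax \<delta>") auto
next
  case False
  then show ?thesis using monotone_onD[OF strict_antimono_on_FF, of "FF_argmax \<delta>" t] by auto
qed

lemma MF_eq_FF_argmax: "MF \<delta> = FF \<delta> (FF_argmax \<delta>)"
  unfolding MF_def
  by (rule cSup_eq_maximum) (use FF_argmax_pos FF_argmax_less_1 FF_le_FF_argmax in auto)

lemma FF_small_near_0:
  assumes "0 < L"
  obtains t where "0 < t" "t < FF_argmax \<delta>" "FF \<delta> t < L"
proof -
  have p: "0 < pdelta \<delta>" using pdelta_pos[OF \<delta>] .
  define t where "t = min (FF_argmax \<delta> / 2) ((L/2) powr (1 / pdelta \<delta>))"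
  have t0: "0 < t" using FF_argmax_pos assms unfolding t_def by auto
  have "t powr pdelta \<delta> \<le> ((L/2) powr (1 / pdelta \<delta>)) powr pdelta \<delta>"
    using t0 p unfolding t_def by (intro powr_mono2) auto
  also have "\<dots> = L/2" using p assms by (simp add: powr_powr)
  finally have "FF \<delta> t < L" using assms powr_gt_zero[of t \<delta>] t0 unfolding FF_def by linarith
  moreover have "t < FF_argmax \<delta>" using FF_argmax_pos unfolding t_def by auto
  ultimately show thesis using t0 that by blast
qed

end

lemma strict_antimono_on_FF_beyond_Phi:
  assumes "Phi < \<delta>"
  shows "strict_antimono_on {0<..} (FF \<delta>)"
proof (intro monotone_onI)
  fix x y :: real assume xy: "x \<in> {0<..}" "y \<in> {0<..}" "x < y"
  show "FF \<delta> y < FF \<delta> x"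
  proof (rule DERIV_neg_imp_decreasing_open[OF \<open>x < y\<close>])
    fix z assume "x < z" "z < y"
    with xy have "0 < z" by simp
    moreover have "0 < \<delta> * z powr (\<delta> - pdelta \<delta>)"
      using assms Phi_gt_1 \<open>0 < z\<close> by (simp add: zero_less_mult_iff)
    then have "pdelta \<delta> - \<delta> * z powr (\<delta> - pdelta \<delta>) < 0"
      using pdelta_neg[OF assms] by linarith
    ultimately have "z powr (pdelta \<delta> - 1) * (pdelta \<delta> - \<delta> * z powr (\<delta> - pdelta \<delta>)) < 0"
      by (simp add: mult_pos_neg)
    with \<open>0 < z\<close> show "\<exists>d. (FF \<delta> has_real_derivative d) (at z) \<and> d < 0"
      using FF_has_real_derivative by blast
  next
    show "continuous_on {x..y} (FF \<delta>)"
      by (rule continuous_on_subset[OF continuous_on_FF]) (use xy in auto)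
  qed
qed


lemma FF_large_near_0:
  assumes "Phi < \<delta>"
  obtains t where "0 < t" "t < 1" "L < FF \<delta> t"
proof -
  have p: "pdelta \<delta> < 0" using pdelta_neg[OF assms(1)] .
  define t where "t = min (1/2) ((\<bar>L\<bar> + 2) powr (1 / pdelta \<delta>))"
  have t: "0 < t" "t < 1" unfolding t_def by auto
  have "\<bar>L\<bar> + 2 = ((\<bar>L\<bar> + 2) powr (1 / pdelta \<delta>)) powr pdelta \<delta>" using p by (simp add: powr_powr)
  also have "\<dots> \<le> t powr pdelta \<delta>" using t p unfolding t_def by (intro powr_mono2') auto
  finally have "\<bar>L\<bar> + 2 \<le> t powr pdelta \<delta>" .
  moreover have "t powr \<delta> \<le> 1" using t assms Phi_gt_1 powr_mono2[of \<delta> t 1] by simp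
  ultimately have "L < FF \<delta> t" unfolding FF_def by linarith
  with t that show thesis by blast
qed



section \<open>Graphs over the circle in the cylinder\<close>

lemma cis_pi_half: "cis (pi/2) = \<i>"
  by (simp add: complex_eq_iff)

lemma cis_three_pi_half: "cis (3*pi/2) = - \<i>"
proof -
  have e: "3*pi/2 = pi/2 + pi" by simp
  have "cos (3*pi/2) = 0" by (simp only: e cos_periodic_pi cos_pi_half minus_zero)
  moreover have "sin (3*pi/2) = -1" by (simp only: e sin_periodic_pi sin_pi_half)
  ultimately show ?thesis by (simp add: complex_eq_iff)
qed

lemma norm_eq_1_iff_Re_Im: "norm (z::complex) = 1 \<longleftrightarrow> (Re z)^2 + (Im z)^2 = 1"
  by (metis cmod_power2 norm_ge_zero power_one real_sqrt_unique real_sqrt_one)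

lemma card_unit_circle_Im_eq:
  assumes "\<bar>y\<bar> < 1"
  shows "card {z::complex. norm z = 1 \<and> Im z = y} = 2"
proof -
  define w where "w = sqrt (1 - y^2)"
  have w: "0 < w" "w^2 = 1 - y^2"
    unfolding w_def using assms by (simp_all add: abs_square_less_1 less_imp_le)
  have "{z::complex. norm z = 1 \<and> Im z = y} = {Complex w y, Complex (-w) y}"
  proof (intro set_eqI iffI)
    fix z :: complex assume "z \<in> {z. norm z = 1 \<and> Im z = y}"
    then have "(Re z)^2 = w^2" "Im z = y" using w norm_eq_1_iff_Re_Im by auto
    then show "z \<in> {Complex w y, Complex (-w) y}" by (auto simp: complex_eq_iff power2_eq_iff)
  qed (use w in \<open>auto simp: norm_eq_1_iff_Re_Im\<close>)
  moreover have "Complex w y \<noteq> Complex (-w) y" using w by simp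
  ultimately show ?thesis by simp
qed

lemma unit_circle_Im_eq_1: "{z::complex. norm z = 1 \<and> Im z = 1} = {cis (pi/2)}"
  by (auto simp: norm_eq_1_iff_Re_Im complex_eq_iff cis_pi_half)

lemma unit_circle_Im_eq_minus_1: "{z::complex. norm z = 1 \<and> Im z = -1} = {cis (3*pi/2)}"
  by (auto simp: norm_eq_1_iff_Re_Im complex_eq_iff cis_three_pi_half)

lemma unit_circle_Im_eq_empty:
  assumes "1 < \<bar>y\<bar>"
  shows "{z::complex. norm z = 1 \<and> Im z = y} = {}"
proof -
  have False if "norm z = 1" "Im z = y" for z :: complex
    using abs_Im_le_cmod[of z] assms that by simp
  then show ?thesis by blast
qed

lemma arc_graph_linepath:
  fixes f :: "real \<Rightarrow> 'a::real_normed_vector"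
  assumes "a \<noteq> b" and cont: "continuous_on (closed_segment a b) f"
  shows "arc ((\<lambda>\<tau>. (\<tau>, f \<tau>)) \<circ> linepath a b)"
proof -
  have "continuous_on (path_image (linepath a b)) (\<lambda>\<tau>. (\<tau>, f \<tau>))"
    using cont by (auto intro: continuous_on_Pair continuous_on_id)
  then have "path ((\<lambda>\<tau>. (\<tau>, f \<tau>)) \<circ> linepath a b)" by (simp add: path_continuous_image)
  moreover have "inj_on ((\<lambda>\<tau>. (\<tau>, f \<tau>)) \<circ> linepath a b) {0..1}"
    by (rule comp_inj_on[OF arc_imp_inj_on]) (use \<open>a \<noteq> b\<close> in \<open>auto simp: inj_on_def\<close>)
  ultimately show ?thesis by (simp add: arc_def)
qed

definition circle_graph :: "real set \<Rightarrow> (real \<Rightarrow> real) \<Rightarrow> (real \<times> complex) set" where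
  "circle_graph S c = {(\<tau>, z). \<tau> \<in> S \<and> norm z = 1 \<and> Im z = c \<tau>}"

lemma circle_graph_Un: "circle_graph (S \<union> T) c = circle_graph S c \<union> circle_graph T c"
  by (auto simp: circle_graph_def)

lemma circle_graph_eq_branches:
  fixes c :: "real \<Rightarrow> real"
  assumes "\<And>\<tau>. \<tau> \<in> S \<Longrightarrow> \<bar>c \<tau>\<bar> \<le> 1"
  defines "branch \<equiv> \<lambda>\<sigma> \<tau>. (\<tau>, complex_of_real (\<sigma> * sqrt (1 - (c \<tau>)^2)) + \<i> * complex_of_real (c \<tau>))"
  shows "circle_graph S c = branch 1 ` S \<union> branch (-1) ` S"
proof (intro set_eqI iffI)
  fix x assume "x \<in> circle_graph S c"
  then obtain \<tau> z where x: "x = (\<tau>, z)" "\<tau> \<in> S" "norm z = 1" "Im z = c \<tau>"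
    unfolding circle_graph_def by blast
  then have "(Re z)^2 = (sqrt (1 - (c \<tau>)^2))^2"
    using assms(1)[of \<tau>] unfolding norm_eq_1_iff_Re_Im by (simp add: abs_square_le_1)
  then have "Re z = sqrt (1 - (c \<tau>)^2) \<or> Re z = - sqrt (1 - (c \<tau>)^2)" by (simp add: power2_eq_iff)
  with x show "x \<in> branch 1 ` S \<union> branch (-1) ` S"
    unfolding branch_def by (auto simp: complex_eq_iff)
next
  fix x assume "x \<in> branch 1 ` S \<union> branch (-1) ` S"
  then obtain \<tau> \<sigma> where "x = branch \<sigma> \<tau>" "\<tau> \<in> S" "\<sigma>^2 = 1" by auto
  with assms(1)[of \<tau>] show "x \<in> circle_graph S c"
    unfolding branch_def circle_graph_def norm_eq_1_iff_Re_Im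
    by (simp add: power_mult_distrib abs_square_le_1)
qed

text \<open>The two branches \<open>Re z = \<plusminus>sqrt (1 - c\<^sup>2)\<close> of the graph are arcs meeting exactly over
  the ends of the interval.\<close>

lemma simple_closed_curve_circle_graph:
  fixes c :: "real \<Rightarrow> real"
  assumes "a < b" and cont: "continuous_on {a..b} c"
    and ends: "\<bar>c a\<bar> = 1" "\<bar>c b\<bar> = 1" and inner: "\<And>\<tau>. \<tau> \<in> {a<..<b} \<Longrightarrow> \<bar>c \<tau>\<bar> < 1"
  shows "simple_closed_curve (circle_graph {a..b} c)"
proof -
  define s where "s = (\<lambda>\<tau>. sqrt (1 - (c \<tau>)^2))"
  define f where "f = (\<lambda>\<sigma> \<tau>. complex_of_real (\<sigma> * s \<tau>) + \<i> * complex_of_real (c \<tau>))"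
  define branch where "branch = (\<lambda>\<sigma> \<tau>. (\<tau>, f \<sigma> \<tau>))"
  define g1 where "g1 = branch 1 \<circ> linepath a b"
  define g2 where "g2 = branch (-1) \<circ> linepath b a"
  have c_le: "\<bar>c \<tau>\<bar> \<le> 1" if "\<tau> \<in> {a..b}" for \<tau>
    using that ends inner[of \<tau>] by (cases "\<tau> = a \<or> \<tau> = b") auto
  have s_0: "s \<tau> = 0 \<longleftrightarrow> \<tau> = a \<or> \<tau> = b" if "\<tau> \<in> {a..b}" for \<tau>
    using that ends inner[of \<tau>] unfolding s_def
    by (cases "\<tau> = a \<or> \<tau> = b") (auto simp: abs_square_eq_1)
  have segs: "closed_segment a b = {a..b}" "closed_segment b a = {a..b}"
    using \<open>a < b\<close> by (auto simp: closed_segment_eq_real_ivl)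
  have "continuous_on {a..b} (f \<sigma>)" for \<sigma>
    unfolding f_def s_def by (intro continuous_intros cont)
  then have arcs: "arc g1" "arc g2"
    unfolding g1_def g2_def branch_def using \<open>a < b\<close> by (auto intro!: arc_graph_linepath simp: segs)
  have images: "path_image g1 = branch 1 ` {a..b}" "path_image g2 = branch (-1) ` {a..b}"
    unfolding g1_def g2_def by (simp_all add: path_image_compose segs)
  have ends_eq: "branch 1 a = branch (-1) a" "branch 1 b = branch (-1) b"
    using s_0[of a] s_0[of b] \<open>a < b\<close> unfolding branch_def f_def by auto
  have join: "pathfinish g1 = pathstart g2" "pathfinish g2 = pathstart g1"
    using ends_eq unfolding g1_def g2_def by (simp_all add: pathstart_compose pathfinish_compose)
  have "path_image g1 \<inter> path_image g2 \<subseteq> {pathstart g1, pathstart g2}"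
  proof
    fix x assume "x \<in> path_image g1 \<inter> path_image g2"
    then obtain \<tau> where "\<tau> \<in> {a..b}" "s \<tau> = 0" "x = branch 1 \<tau>"
      unfolding images branch_def f_def by (auto simp: complex_eq_iff)
    then show "x \<in> {pathstart g1, pathstart g2}"
      using s_0 ends_eq unfolding g1_def g2_def by (auto simp: pathstart_compose)
  qed
  with arcs join have "simple_path (g1 +++ g2)" by (intro simple_path_join_loop) auto
  moreover have "path_image (g1 +++ g2) = circle_graph {a..b} c"
    using path_image_join[of g1 g2] join images circle_graph_eq_branches[of "{a..b}" c] c_le
    unfolding branch_def f_def s_def by simp
  ultimately show ?thesis
    using join unfolding simple_closed_curve_def simple_loop_def by auto
qed

lemma cyl_straight_contraction:
  assumes "(\<tau>, z) \<in> cyl" "norm w = 1" "z \<noteq> w" "u \<in> {0..1}"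
  shows "of_real (1 - u) * z - of_real u * w \<noteq> 0"
    and "((1 - u) * \<tau> + u, sgn (of_real (1 - u) * z - of_real u * w)) \<in> cyl"
proof -
  have z: "norm z = 1" "0 < \<tau>" "\<tau> \<le> 1" using assms(1) by (auto simp: cyl_def)
  show nz: "of_real (1 - u) * z - of_real u * w \<noteq> 0"
  proof
    assume e: "of_real (1 - u) * z - of_real u * w = 0"
    then have "norm (of_real (1 - u) * z) = norm (of_real u * w)" by simp
    moreover have "norm (of_real (1 - u) * z) = 1 - u" "norm (of_real u * w) = u"
      using assms(2,4) z by (simp_all only: norm_mult norm_of_real) simp_all
    ultimately have "u = 1/2" by simp
    with e assms(3) show False by simp
  qed
  have "(1 - u) * \<tau> \<le> 1 - u" "0 \<le> (1 - u) * \<tau>" using z assms(4) by (simp_all add: mult_left_le)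
  moreover have "0 < (1 - u) * \<tau>" if "u = 0" using that z by simp
  ultimately have "0 < (1 - u) * \<tau> + u" "(1 - u) * \<tau> + u \<le> 1"
    using assms(4) by (cases "u = 0"; simp)+
  with nz show "((1 - u) * \<tau> + u, sgn (of_real (1 - u) * z - of_real u * w)) \<in> cyl"
    by (simp add: cyl_def norm_sgn)
qed

text \<open>A loop avoiding the line \<open>z = w\<close> is contracted to \<open>(1, -w)\<close> by the straight homotopy,
  projected back to the circle.\<close>

lemma curve_contractible_in_cyl:
  assumes A: "A \<subseteq> cyl" and w: "norm w = 1" and avoid: "\<And>\<tau>. (\<tau>, w) \<notin> A"
  shows "curve_contractible_in cyl A"
  unfolding curve_contractible_in_def contractible_loop_in_def
proof (intro allI impI)
  fix p assume p: "simple_loop p \<and> path_image p = A"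
  then have "path p" and loop: "pathfinish p = pathstart p"
    unfolding simple_loop_def simple_path_def by auto
  have in_A: "p t \<in> A" if "t \<in> {0..1}" for t
    using p that unfolding path_image_def by auto
  have pA: "p t \<in> cyl" "snd (p t) \<noteq> w" if "t \<in> {0..1}" for t
  proof -
    show "p t \<in> cyl" using A in_A[OF that] by auto
    show "snd (p t) \<noteq> w" using avoid[of "fst (p t)"] in_A[OF that] by (metis prod.collapse)
  qed
  define h where "h = (\<lambda>x::real\<times>real. ((1 - fst x) * fst (p (snd x)) + fst x,
       sgn (of_real (1 - fst x) * snd (p (snd x)) - of_real (fst x) * w)))"
  have nz: "of_real (1 - u) * snd (p t) - of_real u * w \<noteq> 0" if "u \<in> {0..1}" "t \<in> {0..1}" for u t
    using cyl_straight_contraction(1)[of "fst (p t)" "snd (p t)" w u] pA[OF that(2)] w that by simp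
  have pc: "continuous_on ({0..1}\<times>{0..1}) (\<lambda>x::real\<times>real. p (snd x))"
    by (rule continuous_on_compose2[OF \<open>path p\<close>[unfolded path_def] continuous_on_snd])
       (auto intro: continuous_on_id)
  have "homotopic_loops cyl p (\<lambda>_. (1, - w))"
    unfolding homotopic_loops
  proof (intro exI[of _ h] conjI ballI)
    show "continuous_on ({0..1}\<times>{0..1}) h" unfolding h_def
      by (intro continuous_intros pc) (use nz in auto)
    show "h \<in> {0..1}\<times>{0..1} \<rightarrow> cyl"
    proof
      fix x :: "real \<times> real" assume "x \<in> {0..1}\<times>{0..1}"
      then show "h x \<in> cyl"
        using cyl_straight_contraction(2)[of "fst (p (snd x))" "snd (p (snd x))" w "fst x"] pA w
        unfolding h_def by auto
    qed
  next
    fix t :: real assume "t \<in> {0..1}"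
    then show "h (0, t) = p t" using pA(1)[of t] by (auto simp: h_def sgn_div_norm cyl_def)
  next
    fix t :: real assume "t \<in> {0..1}"
    show "h (1, t) = (1, - w)" using w by (simp add: h_def sgn_div_norm)
  next
    fix u :: real assume "u \<in> {0..1}"
    show "pathfinish (h \<circ> Pair u) = pathstart (h \<circ> Pair u)"
      using loop unfolding h_def pathfinish_def pathstart_def by simp
  qed
  then show "\<exists>a. homotopic_loops cyl p (\<lambda>_. a)" by blast
qed

text \<open>The projection to the circle turns a parametrisation of \<open>A\<close> into a simple loop onto the
  circle, whose winding number about \<open>0\<close> is \<open>\<plusminus>1\<close> but would vanish for a null-homotopic loop.\<close>

lemma curve_noncontractible_in_cyl:
  assumes A: "A \<subseteq> cyl" and inj: "inj_on snd A" and onto: "snd ` A = sphere 0 1"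
  shows "curve_noncontractible_in cyl A"
  unfolding curve_noncontractible_in_def
proof (intro allI impI notI)
  fix p assume p: "simple_loop p \<and> path_image p = A" and "contractible_loop_in cyl p"
  then obtain a where "homotopic_loops cyl p (\<lambda>_. a)" unfolding contractible_loop_in_def by blast
  then have "homotopic_loops (snd ` cyl) (snd \<circ> p) (snd \<circ> (\<lambda>_. a))"
    by (rule homotopic_loops_continuous_image) (auto intro: continuous_on_snd continuous_on_id)
  then have "homotopic_loops (snd ` cyl) (snd \<circ> p) (\<lambda>_. snd a)"
    by (simp add: o_def)
  moreover have "snd ` cyl \<subseteq> - {0}" by (auto simp: cyl_def)
  ultimately have null: "homotopic_loops (- {0}) (snd \<circ> p) (\<lambda>_. snd a)"
    by (rule homotopic_loops_subset)
  have "continuous_on (path_image p) snd" by (intro continuous_on_snd continuous_on_id)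
  then have sp: "simple_path (snd \<circ> p)"
    using p inj simple_path_continuous_image[of p snd] unfolding simple_loop_def by auto
  have im: "path_image (snd \<circ> p) = sphere 0 1"
    using p onto by (simp add: path_image_compose)
  have "winding_number (snd \<circ> p) 0 = 0"
    using winding_number_homotopic_loops_null_eq[of "snd \<circ> p" 0] null sp im
    by (auto simp: simple_path_def)
  moreover have "norm (winding_number (snd \<circ> p) 0) = 1"
    using inside_frontier_eq_interior[of "cball (0::complex) 1"]
    by (intro simple_closed_path_norm_winding_number_inside[OF sp]) (simp add: im)
  ultimately show False by simp
qed

lemma circle_graph_noncontractible_loop:
  fixes c :: "real \<Rightarrow> real"
  assumes "0 < a" "a < b" "b \<le> 1" and cont: "continuous_on {a..b} c"
    and inj: "inj_on c {a..b}" and ends: "{c a, c b} = {-1, 1}"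
    and inner: "\<And>\<tau>. \<tau> \<in> {a<..<b} \<Longrightarrow> \<bar>c \<tau>\<bar> < 1"
  shows "simple_closed_curve (circle_graph {a..b} c)"
    and "curve_noncontractible_in cyl (circle_graph {a..b} c)"
proof -
  have "\<bar>c a\<bar> = 1" "\<bar>c b\<bar> = 1" using ends by (auto simp: doubleton_eq_iff)
  then show "simple_closed_curve (circle_graph {a..b} c)"
    by (rule simple_closed_curve_circle_graph[OF \<open>a < b\<close> cont _ _ inner])
  show "curve_noncontractible_in cyl (circle_graph {a..b} c)"
  proof (rule curve_noncontractible_in_cyl)
    show "circle_graph {a..b} c \<subseteq> cyl"
      using assms(1-3) by (auto simp: circle_graph_def cyl_def)
    show "inj_on snd (circle_graph {a..b} c)"
      using inj by (auto simp: circle_graph_def inj_on_def)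
    have "c a \<in> c ` {a..b}" "c b \<in> c ` {a..b}" using assms(2) by auto
    moreover have "-1 \<in> {c a, c b}" "1 \<in> {c a, c b}" using ends by auto
    ultimately have "-1 \<in> c ` {a..b}" "1 \<in> c ` {a..b}" by auto
    then have "{-1..1} \<subseteq> c ` {a..b}"
      by (intro connected_contains_Icc connected_continuous_image cont) auto
    moreover have "Im z \<in> {-1..1}" if "norm z = 1" for z
      using abs_Im_le_cmod[of z] that by (simp add: abs_le_iff)
    ultimately show "snd ` circle_graph {a..b} c = sphere 0 1"
      by (force simp: circle_graph_def image_iff)
  qed
qed

section \<open>The zero set through the level function\<close>

definition sin_level :: "real \<Rightarrow> real \<Rightarrow> real \<Rightarrow> real \<Rightarrow> real" where
  "sin_level \<delta> \<gamma> k \<tau> = (FF \<delta> \<tau> / \<gamma> - 1) / k"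

lemma gfun_eq_0_iff:
  assumes "0 < \<tau>" "0 < \<gamma>" "0 < k"
  shows "gfun \<delta> \<gamma> k \<tau> s = 0 \<longleftrightarrow> sin s = sin_level \<delta> \<gamma> k \<tau>"
proof -
  have e1: "\<tau> powr (\<delta>^2) = \<tau> powr (\<delta>^2 - \<delta>) * \<tau> powr \<delta>"
    using assms by (simp add: powr_add[symmetric])
  have e2: "\<tau> = \<tau> powr (\<delta>^2 - \<delta>) * \<tau> powr pdelta \<delta>"
    using assms by (simp add: powr_add[symmetric] pdelta_def)
  have "gfun \<delta> \<gamma> k \<tau> s = \<tau> powr (\<delta>^2 - \<delta>) * (\<gamma> * (1 + k * sin s) - FF \<delta> \<tau>)"
    unfolding gfun_def FF_def by (subst e1, subst (3) e2) (simp add: algebra_simps)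
  moreover have "0 < \<tau> powr (\<delta>^2 - \<delta>)" using assms by simp
  ultimately have "gfun \<delta> \<gamma> k \<tau> s = 0 \<longleftrightarrow> \<gamma> * (1 + k * sin s) = FF \<delta> \<tau>" by simp
  also have "\<dots> \<longleftrightarrow> sin s = sin_level \<delta> \<gamma> k \<tau>"
    using assms by (auto simp: sin_level_def field_simps)
  finally show ?thesis .
qed

lemma sin_level_1: "sin_level \<delta> \<gamma> k 1 = - 1 / k"
  by (simp add: sin_level_def)

lemma Zset_subset_cyl: "Zset \<delta> \<gamma> k \<subseteq> cyl"
  by (auto simp: Zset_def cyl_def)

context
  fixes \<delta> \<gamma> k :: real
  assumes \<gamma>: "0 < \<gamma>" and k: "0 < k"
begin

lemma Zset_eq_circle_graph: "Zset \<delta> \<gamma> k = circle_graph {0<..1} (sin_level \<delta> \<gamma> k)"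
proof (intro set_eqI iffI)
  fix x assume "x \<in> Zset \<delta> \<gamma> k"
  then obtain \<tau> s where "x = (\<tau>, cis s)" "\<tau> \<in> {0<..1}" "gfun \<delta> \<gamma> k \<tau> s = 0"
    unfolding Zset_def by auto
  then show "x \<in> circle_graph {0<..1} (sin_level \<delta> \<gamma> k)"
    using gfun_eq_0_iff \<gamma> k by (auto simp: circle_graph_def)
next
  fix x assume "x \<in> circle_graph {0<..1} (sin_level \<delta> \<gamma> k)"
  then obtain \<tau> z where x: "x = (\<tau>, z)" "\<tau> \<in> {0<..1}" "norm z = 1" "Im z = sin_level \<delta> \<gamma> k \<tau>"
    unfolding circle_graph_def by auto
  then have "cis (Arg z) = sgn z" by (intro cis_Arg) auto
  with x have z: "z = cis (Arg z)" by (simp add: sgn_div_norm)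
  then have "sin (Arg z) = Im z" by (metis cis.sel(2))
  with x have "gfun \<delta> \<gamma> k \<tau> (Arg z) = 0" using gfun_eq_0_iff \<gamma> k by simp
  with x z show "x \<in> Zset \<delta> \<gamma> k"
    unfolding Zset_def by (intro CollectI exI[of _ \<tau>] exI[of _ "Arg z"]) auto
qed

lemma Zset_eq_circle_graph_on:
  assumes "S \<subseteq> {0<..1}" and outside: "\<And>\<tau>. \<tau> \<in> {0<..1} - S \<Longrightarrow> 1 < \<bar>sin_level \<delta> \<gamma> k \<tau>\<bar>"
  shows "Zset \<delta> \<gamma> k = circle_graph S (sin_level \<delta> \<gamma> k)"
proof -
  have "\<tau> \<in> S" if "\<tau> \<in> {0<..1}" "norm z = 1" "Im z = sin_level \<delta> \<gamma> k \<tau>" for \<tau> z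
    using that outside[of \<tau>] abs_Im_le_cmod[of z] by force
  then show ?thesis using assms(1) unfolding Zset_eq_circle_graph circle_graph_def by auto
qed

lemma fibre_eq_circle_level:
  "fibre \<delta> \<gamma> k \<tau> = {z. \<tau> \<in> {0<..1} \<and> norm z = 1 \<and> Im z = sin_level \<delta> \<gamma> k \<tau>}"
  unfolding fibre_def Zset_eq_circle_graph circle_graph_def by auto

lemma card_fibre_eq_2:
  "\<tau> \<in> {0<..1} \<Longrightarrow> \<bar>sin_level \<delta> \<gamma> k \<tau>\<bar> < 1 \<Longrightarrow> card (fibre \<delta> \<gamma> k \<tau>) = 2"
  unfolding fibre_eq_circle_level using card_unit_circle_Im_eq by simp

lemma fibre_eq_top: "\<tau> \<in> {0<..1} \<Longrightarrow> sin_level \<delta> \<gamma> k \<tau> = 1 \<Longrightarrow> fibre \<delta> \<gamma> k \<tau> = {cis (pi/2)}"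
  unfolding fibre_eq_circle_level using unit_circle_Im_eq_1 by simp

lemma fibre_eq_bottom:
  "\<tau> \<in> {0<..1} \<Longrightarrow> sin_level \<delta> \<gamma> k \<tau> = -1 \<Longrightarrow> fibre \<delta> \<gamma> k \<tau> = {cis (3*pi/2)}"
  unfolding fibre_eq_circle_level using unit_circle_Im_eq_minus_1 by simp

lemma fibre_eq_empty:
  "(\<tau> \<in> {0<..1} \<Longrightarrow> 1 < \<bar>sin_level \<delta> \<gamma> k \<tau>\<bar>) \<Longrightarrow> fibre \<delta> \<gamma> k \<tau> = {}"
  unfolding fibre_eq_circle_level using unit_circle_Im_eq_empty by (cases "\<tau> \<in> {0<..1}") auto

lemma fold_point_if_sin_level:
  assumes "\<tau> \<in> {0<..1}" "cos s = 0" "sin s = sin_level \<delta> \<gamma> k \<tau>"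
  shows "fold_point \<delta> \<gamma> k \<tau> s"
proof -
  have "((\<lambda>s. gfun \<delta> \<gamma> k \<tau> s) has_real_derivative \<gamma> * \<tau> powr (\<delta>^2 - \<delta>) * (k * cos s)) (at s)"
    unfolding gfun_def by (auto intro!: derivative_eq_intros)
  then show ?thesis unfolding fold_point_def using assms gfun_eq_0_iff \<gamma> k by auto
qed

lemma fold_point_top: "\<tau> \<in> {0<..1} \<Longrightarrow> sin_level \<delta> \<gamma> k \<tau> = 1 \<Longrightarrow> fold_point \<delta> \<gamma> k \<tau> (pi/2)"
  by (rule fold_point_if_sin_level) auto

lemma fold_point_bottom:
  "\<tau> \<in> {0<..1} \<Longrightarrow> sin_level \<delta> \<gamma> k \<tau> = -1 \<Longrightarrow> fold_point \<delta> \<gamma> k \<tau> (3*pi/2)"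
  using arg_cong[OF cis_three_pi_half, of Re] arg_cong[OF cis_three_pi_half, of Im]
  by (intro fold_point_if_sin_level) auto

lemma sin_level_less_iff: "sin_level \<delta> \<gamma> k x < sin_level \<delta> \<gamma> k y \<longleftrightarrow> FF \<delta> x < FF \<delta> y"
  using \<gamma> k by (simp add: sin_level_def divide_strict_right_mono_neg field_simps)

lemma continuous_on_sin_level: "continuous_on {0<..} (sin_level \<delta> \<gamma> k)"
  unfolding sin_level_def[abs_def] using \<gamma> k by (intro continuous_intros continuous_on_FF) auto

lemma strict_mono_on_sin_level: "strict_mono_on A (FF \<delta>) \<Longrightarrow> strict_mono_on A (sin_level \<delta> \<gamma> k)"
  and strict_antimono_on_sin_level:
    "strict_antimono_on A (FF \<delta>) \<Longrightarrow> strict_antimono_on A (sin_level \<delta> \<gamma> k)"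
  by (auto simp: monotone_on_def sin_level_less_iff)

lemma Zset_two_noncontractible_loops:
  assumes a: "0 < a1" "a1 < a2" "a2 < a3" "a3 < a4" "a4 \<le> 1"
    and inj: "inj_on (sin_level \<delta> \<gamma> k) {a1..a2}" "inj_on (sin_level \<delta> \<gamma> k) {a3..a4}"
    and ends: "{sin_level \<delta> \<gamma> k a1, sin_level \<delta> \<gamma> k a2} = {-1, 1}"
      "{sin_level \<delta> \<gamma> k a3, sin_level \<delta> \<gamma> k a4} = {-1, 1}"
    and inner: "\<And>t. t \<in> {a1<..<a2} \<union> {a3<..<a4} \<Longrightarrow> \<bar>sin_level \<delta> \<gamma> k t\<bar> < 1"
    and outer: "\<And>t. t \<in> {0<..1} - ({a1..a2} \<union> {a3..a4}) \<Longrightarrow> 1 < \<bar>sin_level \<delta> \<gamma> k t\<bar>"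
  shows "\<exists>A B. Zset \<delta> \<gamma> k = A \<union> B \<and> A \<inter> B = {} \<and>
      simple_closed_curve A \<and> simple_closed_curve B \<and>
      curve_noncontractible_in cyl A \<and> curve_noncontractible_in cyl B"
proof (intro exI conjI)
  define A B where "A = circle_graph {a1..a2} (sin_level \<delta> \<gamma> k)"
    and "B = circle_graph {a3..a4} (sin_level \<delta> \<gamma> k)"
  show "Zset \<delta> \<gamma> k = A \<union> B"
    unfolding A_def B_def circle_graph_Un[symmetric] using a outer
    by (intro Zset_eq_circle_graph_on) auto
  show "A \<inter> B = {}" using a by (auto simp: A_def B_def circle_graph_def)
  have cont: "continuous_on {a1..a2} (sin_level \<delta> \<gamma> k)" "continuous_on {a3..a4} (sin_level \<delta> \<gamma> k)"
    using a by (auto intro: continuous_on_subset[OF continuous_on_sin_level])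
  show "simple_closed_curve A" "curve_noncontractible_in cyl A"
    unfolding A_def using circle_graph_noncontractible_loop[OF _ _ _ cont(1) inj(1) ends(1)] a inner
    by auto
  show "simple_closed_curve B" "curve_noncontractible_in cyl B"
    unfolding B_def using circle_graph_noncontractible_loop[OF _ _ _ cont(2) inj(2) ends(2)] a inner
    by auto
qed

end

text \<open>The whole plane serves as the neighbourhood \<open>U\<close>: the fibres are known globally.\<close>

lemma supercritical_if_fibres:
  assumes "a < \<tau>0" "\<tau>0 < b" "fibre \<delta> \<gamma> k \<tau>0 = {w}"
    and "\<And>\<tau>. \<tau> \<in> {a<..<\<tau>0} \<Longrightarrow> fibre \<delta> \<gamma> k \<tau> = {}"
    and "\<And>\<tau>. \<tau> \<in> {\<tau>0<..<b} \<Longrightarrow> card (fibre \<delta> \<gamma> k \<tau>) = 2"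
  shows "supercritical \<delta> \<gamma> k \<tau>0 s0"
proof -
  have fib: "{z. (\<tau>, z) \<in> UNIV \<inter> Zset \<delta> \<gamma> k} = fibre \<delta> \<gamma> k \<tau>" for \<tau>
    unfolding fibre_def by simp
  show ?thesis unfolding supercritical_def
    by (rule exI[of _ UNIV], unfold fib,
        intro conjI open_UNIV UNIV_I exI[of _ "min (\<tau>0 - a) (b - \<tau>0)"] allI)
       (use assms in auto)
qed

lemma subcritical_if_fibres:
  assumes "a < \<tau>0" "\<tau>0 < b" "fibre \<delta> \<gamma> k \<tau>0 = {w}"
    and "\<And>\<tau>. \<tau> \<in> {a<..<\<tau>0} \<Longrightarrow> card (fibre \<delta> \<gamma> k \<tau>) = 2"
    and "\<And>\<tau>. \<tau> \<in> {\<tau>0<..<b} \<Longrightarrow> fibre \<delta> \<gamma> k \<tau> = {}"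
  shows "subcritical \<delta> \<gamma> k \<tau>0 s0"
proof -
  have fib: "{z. (\<tau>, z) \<in> UNIV \<inter> Zset \<delta> \<gamma> k} = fibre \<delta> \<gamma> k \<tau>" for \<tau>
    unfolding fibre_def by simp
  show ?thesis unfolding subcritical_def
    by (rule exI[of _ UNIV], unfold fib,
        intro conjI open_UNIV UNIV_I exI[of _ "min (\<tau>0 - a) (b - \<tau>0)"] allI)
       (use assms in auto)
qed

section \<open>The four regimes\<close>

context
  fixes \<delta> \<gamma> k :: real
  assumes k: "0 < k" "k < 1" and \<gamma>: "0 < \<gamma>" and \<delta>: "1 < \<delta>" "\<delta> < Phi"
begin

lemma sin_level_le_argmax: "0 < t \<Longrightarrow> sin_level \<delta> \<gamma> k t \<le> sin_level \<delta> \<gamma> k (FF_argmax \<delta>)"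
  using FF_le_FF_argmax[OF \<delta>] sin_level_less_iff[OF \<gamma> k(1)] by (simp add: not_less[symmetric])

lemma gamma_minus_less_iff: "gamma_minus k \<delta> < \<gamma> \<longleftrightarrow> sin_level \<delta> \<gamma> k (FF_argmax \<delta>) < -1"
  and less_gamma_minus_iff: "\<gamma> < gamma_minus k \<delta> \<longleftrightarrow> -1 < sin_level \<delta> \<gamma> k (FF_argmax \<delta>)"
  and gamma_plus_less_iff: "gamma_plus k \<delta> < \<gamma> \<longleftrightarrow> sin_level \<delta> \<gamma> k (FF_argmax \<delta>) < 1"
  and less_gamma_plus_iff: "\<gamma> < gamma_plus k \<delta> \<longleftrightarrow> 1 < sin_level \<delta> \<gamma> k (FF_argmax \<delta>)"
  using k \<gamma> by (simp_all add: gamma_minus_def gamma_plus_def MF_eq_FF_argmax[OF \<delta>] sin_level_def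
      field_simps)

lemma sin_level_crossings:
  assumes "-1 \<le> L" "L < sin_level \<delta> \<gamma> k (FF_argmax \<delta>)"
  obtains l r where "0 < l" "l < FF_argmax \<delta>" "FF_argmax \<delta> < r" "r < 1"
    "\<And>t. t \<in> {0<..1} \<Longrightarrow> sin_level \<delta> \<gamma> k t < L \<longleftrightarrow> t < l \<or> r < t"
    "\<And>t. t \<in> {0<..1} \<Longrightarrow> sin_level \<delta> \<gamma> k t = L \<longleftrightarrow> t = l \<or> t = r"
proof -
  obtain t0 where t0: "0 < t0" "t0 < FF_argmax \<delta>" "FF \<delta> t0 < \<gamma> * (1 - k)"
    using FF_small_near_0[OF \<delta>, of "\<gamma> * (1 - k)"] \<gamma> k by auto
  have "sin_level \<delta> \<gamma> k t0 < -1" using t0 \<gamma> k by (simp add: sin_level_def field_simps)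
  moreover have "sin_level \<delta> \<gamma> k 1 < -1" using k by (simp add: sin_level_1 field_simps)
  ultimately have "sin_level \<delta> \<gamma> k t0 < L" "sin_level \<delta> \<gamma> k 1 < L" using assms(1) by auto
  moreover have "continuous_on {0<..1} (sin_level \<delta> \<gamma> k)"
    by (rule continuous_on_subset[OF continuous_on_sin_level[OF \<gamma> k(1)]]) auto
  moreover have "strict_mono_on {0<..FF_argmax \<delta>} (sin_level \<delta> \<gamma> k)"
    by (rule strict_mono_on_sin_level[OF \<gamma> k(1) strict_mono_on_FF[OF \<delta>]])
  moreover have "strict_antimono_on {FF_argmax \<delta>..1} (sin_level \<delta> \<gamma> k)"
    by (rule monotone_on_subset[OF strict_antimono_on_sin_level[OF \<gamma> k(1) strict_antimono_on_FF[OF \<delta>]]])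
       auto
  ultimately show thesis
    using unimodal_level_crossings[of "sin_level \<delta> \<gamma> k" "FF_argmax \<delta>" t0 L] that
      FF_argmax_pos[OF \<delta>] FF_argmax_less_1[OF \<delta>] t0 assms(2) by blast
qed

lemma regime_W:
  assumes "gamma_minus k \<delta> < \<gamma>"
  shows "Zset \<delta> \<gamma> k = {}"
proof -
  have "1 < \<bar>sin_level \<delta> \<gamma> k t\<bar>" if "t \<in> {0<..1}" for t
    using sin_level_le_argmax[of t] that assms unfolding gamma_minus_less_iff by auto
  then have "Zset \<delta> \<gamma> k = circle_graph {} (sin_level \<delta> \<gamma> k)"
    by (intro Zset_eq_circle_graph_on[OF \<gamma> k(1)]) auto
  then show ?thesis by (simp add: circle_graph_def)
qed

lemma sin_level_one_window:
  assumes "-1 < sin_level \<delta> \<gamma> k (FF_argmax \<delta>)" "sin_level \<delta> \<gamma> k (FF_argmax \<delta>) < 1"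
  obtains l r where "0 < l" "l < r" "r < 1" "sin_level \<delta> \<gamma> k l = -1" "sin_level \<delta> \<gamma> k r = -1"
    "\<And>t. t \<in> {l<..<r} \<Longrightarrow> \<bar>sin_level \<delta> \<gamma> k t\<bar> < 1"
    "\<And>t. t \<in> {0<..1} - {l..r} \<Longrightarrow> sin_level \<delta> \<gamma> k t < -1"
proof -
  obtain l r where lr: "0 < l" "l < FF_argmax \<delta>" "FF_argmax \<delta> < r" "r < 1"
    and below: "\<And>t. t \<in> {0<..1} \<Longrightarrow> sin_level \<delta> \<gamma> k t < -1 \<longleftrightarrow> t < l \<or> r < t"
    and at: "\<And>t. t \<in> {0<..1} \<Longrightarrow> sin_level \<delta> \<gamma> k t = -1 \<longleftrightarrow> t = l \<or> t = r"
    using sin_level_crossings[OF order_refl assms(1)] by blast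
  have inner: "\<bar>sin_level \<delta> \<gamma> k t\<bar> < 1" if "t \<in> {l<..<r}" for t
    using that lr below[of t] at[of t] sin_level_le_argmax[of t] assms(2) by auto
  have outer: "sin_level \<delta> \<gamma> k t < -1" if "t \<in> {0<..1} - {l..r}" for t
    using that below[of t] by auto
  show thesis by (rule that[of l r]) (use lr at inner outer in auto)
qed

lemma sin_level_two_windows:
  assumes "1 < sin_level \<delta> \<gamma> k (FF_argmax \<delta>)"
  obtains a1 a2 a3 a4 where "0 < a1" "a1 < a2" "a2 < a3" "a3 < a4" "a4 < 1"
    "inj_on (sin_level \<delta> \<gamma> k) {a1..a2}" "inj_on (sin_level \<delta> \<gamma> k) {a3..a4}"
    "sin_level \<delta> \<gamma> k a1 = -1" "sin_level \<delta> \<gamma> k a2 = 1"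
    "sin_level \<delta> \<gamma> k a3 = 1" "sin_level \<delta> \<gamma> k a4 = -1"
    "\<And>t. t \<in> {a1<..<a2} \<union> {a3<..<a4} \<Longrightarrow> \<bar>sin_level \<delta> \<gamma> k t\<bar> < 1"
    "\<And>t. t \<in> {0<..1} - ({a1..a2} \<union> {a3..a4}) \<Longrightarrow> 1 < \<bar>sin_level \<delta> \<gamma> k t\<bar>"
proof -
  obtain a1 a4 where a14: "0 < a1" "a1 < FF_argmax \<delta>" "FF_argmax \<delta> < a4" "a4 < 1"
    and below: "\<And>t. t \<in> {0<..1} \<Longrightarrow> sin_level \<delta> \<gamma> k t < -1 \<longleftrightarrow> t < a1 \<or> a4 < t"
    and at_bottom: "\<And>t. t \<in> {0<..1} \<Longrightarrow> sin_level \<delta> \<gamma> k t = -1 \<longleftrightarrow> t = a1 \<or> t = a4"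
    using sin_level_crossings[of "-1"] assms by auto
  obtain a2 a3 where a23: "0 < a2" "a2 < FF_argmax \<delta>" "FF_argmax \<delta> < a3" "a3 < 1"
    and below_top: "\<And>t. t \<in> {0<..1} \<Longrightarrow> sin_level \<delta> \<gamma> k t < 1 \<longleftrightarrow> t < a2 \<or> a3 < t"
    and at_top: "\<And>t. t \<in> {0<..1} \<Longrightarrow> sin_level \<delta> \<gamma> k t = 1 \<longleftrightarrow> t = a2 \<or> t = a3"
    using sin_level_crossings[of 1] assms by auto
  have ends: "sin_level \<delta> \<gamma> k a1 = -1" "sin_level \<delta> \<gamma> k a2 = 1"
    "sin_level \<delta> \<gamma> k a3 = 1" "sin_level \<delta> \<gamma> k a4 = -1"
    using a14 a23 at_bottom at_top by auto
  have "a1 \<le> a2" "a3 \<le> a4" using below[of a2] below[of a3] ends a14 a23 by auto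
  moreover have "a1 \<noteq> a2" "a3 \<noteq> a4" using ends by auto
  ultimately have order: "a1 < a2" "a3 < a4" by auto
  have inner: "\<bar>sin_level \<delta> \<gamma> k t\<bar> < 1" if "t \<in> {a1<..<a2} \<union> {a3<..<a4}" for t
    using that order a14 a23 below[of t] at_bottom[of t] below_top[of t] by auto
  have outer: "1 < \<bar>sin_level \<delta> \<gamma> k t\<bar>" if "t \<in> {0<..1} - ({a1..a2} \<union> {a3..a4})" for t
    using that order a14 a23 below[of t] below_top[of t] at_top[of t] by auto
  have "strict_mono_on {a1..a2} (sin_level \<delta> \<gamma> k)"
    using a14 a23 by (intro monotone_on_subset[OF strict_mono_on_sin_level[OF \<gamma> k(1) strict_mono_on_FF[OF \<delta>]]])
      auto
  then have injA: "inj_on (sin_level \<delta> \<gamma> k) {a1..a2}" by (rule strict_mono_on_imp_inj_on)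
  have "strict_antimono_on {a3..a4} (sin_level \<delta> \<gamma> k)"
    using a14 a23
    by (intro monotone_on_subset[OF strict_antimono_on_sin_level[OF \<gamma> k(1) strict_antimono_on_FF[OF \<delta>]]])
      auto
  then have injB: "inj_on (sin_level \<delta> \<gamma> k) {a3..a4}" by (simp add: strict_antimono_iff_antimono)
  show thesis
    by (rule that[of a1 a2 a3 a4]) (use a14 a23 order ends inner outer injA injB in auto)
qed

lemma regime_X:
  assumes "gamma_plus k \<delta> < \<gamma>" "\<gamma> < gamma_minus k \<delta>"
  shows "\<exists>\<tau>1 \<tau>2. 0 < \<tau>1 \<and> \<tau>1 < \<tau>2 \<and> \<tau>2 < 1 \<and>
        (\<forall>\<tau>. (\<tau>1 < \<tau> \<and> \<tau> < \<tau>2 \<longrightarrow> card (fibre \<delta> \<gamma> k \<tau>) = 2) \<and>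
             (\<tau> = \<tau>1 \<or> \<tau> = \<tau>2 \<longrightarrow> fibre \<delta> \<gamma> k \<tau> = {cis (3*pi/2)}) \<and>
             (\<tau> \<notin> {\<tau>1..\<tau>2} \<longrightarrow> fibre \<delta> \<gamma> k \<tau> = {})) \<and>
        fold_point \<delta> \<gamma> k \<tau>1 (3*pi/2) \<and> supercritical \<delta> \<gamma> k \<tau>1 (3*pi/2) \<and>
        fold_point \<delta> \<gamma> k \<tau>2 (3*pi/2) \<and> subcritical \<delta> \<gamma> k \<tau>2 (3*pi/2) \<and>
        simple_closed_curve (Zset \<delta> \<gamma> k) \<and> curve_contractible_in cyl (Zset \<delta> \<gamma> k)"
proof -
  obtain l r where lr: "0 < l" "l < r" "r < 1"
    and ends: "sin_level \<delta> \<gamma> k l = -1" "sin_level \<delta> \<gamma> k r = -1"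
    and inner: "\<And>t. t \<in> {l<..<r} \<Longrightarrow> \<bar>sin_level \<delta> \<gamma> k t\<bar> < 1"
    and outer: "\<And>t. t \<in> {0<..1} - {l..r} \<Longrightarrow> sin_level \<delta> \<gamma> k t < -1"
    using sin_level_one_window assms
    unfolding less_gamma_minus_iff gamma_plus_less_iff by blast
  have two: "card (fibre \<delta> \<gamma> k t) = 2" if "t \<in> {l<..<r}" for t
    using card_fibre_eq_2[OF \<gamma> k(1)] inner that lr by auto
  have one: "fibre \<delta> \<gamma> k t = {cis (3*pi/2)}" if "t = l \<or> t = r" for t
    using fibre_eq_bottom[OF \<gamma> k(1)] ends that lr by auto
  have none: "fibre \<delta> \<gamma> k t = {}" if "t \<notin> {l..r}" for t
    by (intro fibre_eq_empty[OF \<gamma> k(1)]) (use outer[of t] that in auto)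
  have fold: "fold_point \<delta> \<gamma> k t (3*pi/2)" if "t = l \<or> t = r" for t
    using fold_point_bottom[OF \<gamma> k(1)] ends that lr by auto
  have super: "supercritical \<delta> \<gamma> k l (3*pi/2)"
    by (rule supercritical_if_fibres[of 0 l r]) (use lr one two none in auto)
  have sub: "subcritical \<delta> \<gamma> k r (3*pi/2)"
    by (rule subcritical_if_fibres[of l r 2]) (use lr one two none in auto)
  have Z: "Zset \<delta> \<gamma> k = circle_graph {l..r} (sin_level \<delta> \<gamma> k)"
    using lr outer by (intro Zset_eq_circle_graph_on[OF \<gamma> k(1)]) force+
  have "continuous_on {l..r} (sin_level \<delta> \<gamma> k)"
    by (rule continuous_on_subset[OF continuous_on_sin_level[OF \<gamma> k(1)]]) (use lr in auto)
  then have curve: "simple_closed_curve (Zset \<delta> \<gamma> k)"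
    unfolding Z using lr ends inner by (intro simple_closed_curve_circle_graph) auto
  have "(\<tau>, \<i>) \<notin> Zset \<delta> \<gamma> k" for \<tau>
    using lr inner[of \<tau>] ends unfolding Z circle_graph_def by (cases "\<tau> = l \<or> \<tau> = r") auto
  then have contractible: "curve_contractible_in cyl (Zset \<delta> \<gamma> k)"
    by (intro curve_contractible_in_cyl[of _ \<i>] Zset_subset_cyl) auto
  show ?thesis
    using lr one two none fold super sub curve contractible
    by (intro exI[of _ l] exI[of _ r] conjI allI impI) auto
qed

lemma regime_Y:
  assumes "\<gamma> < gamma_plus k \<delta>"
  shows "\<exists>a1 a2 a3 a4. 0 < a1 \<and> a1 < a2 \<and> a2 < a3 \<and> a3 < a4 \<and> a4 < 1 \<and>
        (\<forall>\<tau>. ((a1 < \<tau> \<and> \<tau> < a2) \<or> (a3 < \<tau> \<and> \<tau> < a4) \<longrightarrow> card (fibre \<delta> \<gamma> k \<tau>) = 2) \<and>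
             (\<tau> = a1 \<longrightarrow> fibre \<delta> \<gamma> k \<tau> = {cis (3*pi/2)}) \<and>
             (\<tau> = a2 \<longrightarrow> fibre \<delta> \<gamma> k \<tau> = {cis (pi/2)}) \<and>
             (\<tau> = a3 \<longrightarrow> fibre \<delta> \<gamma> k \<tau> = {cis (pi/2)}) \<and>
             (\<tau> = a4 \<longrightarrow> fibre \<delta> \<gamma> k \<tau> = {cis (3*pi/2)}) \<and>
             (\<tau> \<notin> {a1..a2} \<union> {a3..a4} \<longrightarrow> fibre \<delta> \<gamma> k \<tau> = {})) \<and>
        fold_point \<delta> \<gamma> k a1 (3*pi/2) \<and> supercritical \<delta> \<gamma> k a1 (3*pi/2) \<and>
        fold_point \<delta> \<gamma> k a2 (pi/2) \<and> subcritical \<delta> \<gamma> k a2 (pi/2) \<and>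
        fold_point \<delta> \<gamma> k a3 (pi/2) \<and> supercritical \<delta> \<gamma> k a3 (pi/2) \<and>
        fold_point \<delta> \<gamma> k a4 (3*pi/2) \<and> subcritical \<delta> \<gamma> k a4 (3*pi/2) \<and>
        (\<exists>A B. Zset \<delta> \<gamma> k = A \<union> B \<and> A \<inter> B = {} \<and>
           simple_closed_curve A \<and> simple_closed_curve B \<and>
           curve_noncontractible_in cyl A \<and> curve_noncontractible_in cyl B)"
proof -
  obtain a1 a2 a3 a4 where a: "0 < a1" "a1 < a2" "a2 < a3" "a3 < a4" "a4 < 1"
    and inj: "inj_on (sin_level \<delta> \<gamma> k) {a1..a2}" "inj_on (sin_level \<delta> \<gamma> k) {a3..a4}"
    and ends: "sin_level \<delta> \<gamma> k a1 = -1" "sin_level \<delta> \<gamma> k a2 = 1"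
      "sin_level \<delta> \<gamma> k a3 = 1" "sin_level \<delta> \<gamma> k a4 = -1"
    and inner: "\<And>t. t \<in> {a1<..<a2} \<union> {a3<..<a4} \<Longrightarrow> \<bar>sin_level \<delta> \<gamma> k t\<bar> < 1"
    and outer: "\<And>t. t \<in> {0<..1} - ({a1..a2} \<union> {a3..a4}) \<Longrightarrow> 1 < \<bar>sin_level \<delta> \<gamma> k t\<bar>"
    using sin_level_two_windows assms unfolding less_gamma_plus_iff by blast
  have two: "card (fibre \<delta> \<gamma> k t) = 2" if "t \<in> {a1<..<a2} \<union> {a3<..<a4}" for t
    using card_fibre_eq_2[OF \<gamma> k(1)] inner[OF that] that a by auto
  have bottom: "fibre \<delta> \<gamma> k t = {cis (3*pi/2)}" if "t = a1 \<or> t = a4" for t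
    using fibre_eq_bottom[OF \<gamma> k(1)] ends that a by auto
  have top: "fibre \<delta> \<gamma> k t = {cis (pi/2)}" if "t = a2 \<or> t = a3" for t
    using fibre_eq_top[OF \<gamma> k(1)] ends that a by auto
  have none: "fibre \<delta> \<gamma> k t = {}" if "t \<notin> {a1..a2} \<union> {a3..a4}" for t
    by (intro fibre_eq_empty[OF \<gamma> k(1)]) (use outer[of t] that in auto)
  have folds: "fold_point \<delta> \<gamma> k a1 (3*pi/2)" "fold_point \<delta> \<gamma> k a4 (3*pi/2)"
    "fold_point \<delta> \<gamma> k a2 (pi/2)" "fold_point \<delta> \<gamma> k a3 (pi/2)"
    using fold_point_bottom[OF \<gamma> k(1)] fold_point_top[OF \<gamma> k(1)] ends a by auto
  have super1: "supercritical \<delta> \<gamma> k a1 (3*pi/2)"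
    by (rule supercritical_if_fibres[of 0 a1 a2]) (use a two bottom none in auto)
  have sub2: "subcritical \<delta> \<gamma> k a2 (pi/2)"
    by (rule subcritical_if_fibres[of a1 a2 a3]) (use a two top none in auto)
  have super3: "supercritical \<delta> \<gamma> k a3 (pi/2)"
    by (rule supercritical_if_fibres[of a2 a3 a4]) (use a two top none in auto)
  have sub4: "subcritical \<delta> \<gamma> k a4 (3*pi/2)"
    by (rule subcritical_if_fibres[of a3 a4 2]) (use a two bottom none in auto)
  have components: "\<exists>A B. Zset \<delta> \<gamma> k = A \<union> B \<and> A \<inter> B = {} \<and>
      simple_closed_curve A \<and> simple_closed_curve B \<and>
      curve_noncontractible_in cyl A \<and> curve_noncontractible_in cyl B"
    by (rule Zset_two_noncontractible_loops[OF \<gamma> k(1) a(1-4) _ inj _ _ inner outer])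
       (use a ends in auto)
  have fibres: "\<forall>\<tau>. ((a1 < \<tau> \<and> \<tau> < a2) \<or> (a3 < \<tau> \<and> \<tau> < a4) \<longrightarrow> card (fibre \<delta> \<gamma> k \<tau>) = 2) \<and>
      (\<tau> = a1 \<longrightarrow> fibre \<delta> \<gamma> k \<tau> = {cis (3*pi/2)}) \<and> (\<tau> = a2 \<longrightarrow> fibre \<delta> \<gamma> k \<tau> = {cis (pi/2)}) \<and>
      (\<tau> = a3 \<longrightarrow> fibre \<delta> \<gamma> k \<tau> = {cis (pi/2)}) \<and> (\<tau> = a4 \<longrightarrow> fibre \<delta> \<gamma> k \<tau> = {cis (3*pi/2)}) \<and>
      (\<tau> \<notin> {a1..a2} \<union> {a3..a4} \<longrightarrow> fibre \<delta> \<gamma> k \<tau> = {})"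
    using two bottom top none by auto
  show ?thesis
    by (intro exI[of _ a1] exI[of _ a2] exI[of _ a3] exI[of _ a4] conjI a fibres folds super1 sub2
        super3 sub4 components)
qed

end

context
  fixes \<delta> \<gamma> k :: real
  assumes k: "0 < k" "k < 1" and \<gamma>: "0 < \<gamma>" and \<delta>: "Phi < \<delta>"
begin

lemma sin_level_window_beyond_Phi:
  obtains b1 b2 where "0 < b1" "b1 < b2" "b2 < 1" "inj_on (sin_level \<delta> \<gamma> k) {b1..b2}"
    "sin_level \<delta> \<gamma> k b1 = 1" "sin_level \<delta> \<gamma> k b2 = -1"
    "\<And>t. t \<in> {b1<..<b2} \<Longrightarrow> \<bar>sin_level \<delta> \<gamma> k t\<bar> < 1"
    "\<And>t. t \<in> {0<..1} - {b1..b2} \<Longrightarrow> 1 < \<bar>sin_level \<delta> \<gamma> k t\<bar>"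
proof -
  have cont: "continuous_on {0<..1} (sin_level \<delta> \<gamma> k)"
    by (rule continuous_on_subset[OF continuous_on_sin_level[OF \<gamma> k(1)]]) auto
  have antimono: "strict_antimono_on {0<..1} (sin_level \<delta> \<gamma> k)"
    by (rule monotone_on_subset[OF strict_antimono_on_sin_level[OF \<gamma> k(1)
          strict_antimono_on_FF_beyond_Phi[OF \<delta>]]]) auto
  obtain t0 where t0: "0 < t0" "t0 < 1" "\<gamma> * (1 + k) < FF \<delta> t0"
    using FF_large_near_0[OF \<delta>] by blast
  then have "1 < sin_level \<delta> \<gamma> k t0" using \<gamma> k by (simp add: sin_level_def field_simps)
  moreover have "sin_level \<delta> \<gamma> k 1 < -1" using k by (simp add: sin_level_1 field_simps)
  ultimately have levels: "1 < sin_level \<delta> \<gamma> k t0" "sin_level \<delta> \<gamma> k 1 < 1"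
    "-1 < sin_level \<delta> \<gamma> k t0" "sin_level \<delta> \<gamma> k 1 < -1"
    by auto
  obtain b1 where b1: "0 < b1" "b1 < 1"
    and below_top: "\<And>t. t \<in> {0<..1} \<Longrightarrow> sin_level \<delta> \<gamma> k t < 1 \<longleftrightarrow> b1 < t"
    and at_top: "\<And>t. t \<in> {0<..1} \<Longrightarrow> sin_level \<delta> \<gamma> k t = 1 \<longleftrightarrow> t = b1"
    by (rule strict_antimono_level_crossing[OF cont antimono t0(1,2) levels(1,2)]) blast
  obtain b2 where b2: "0 < b2" "b2 < 1"
    and below: "\<And>t. t \<in> {0<..1} \<Longrightarrow> sin_level \<delta> \<gamma> k t < -1 \<longleftrightarrow> b2 < t"
    and at_bottom: "\<And>t. t \<in> {0<..1} \<Longrightarrow> sin_level \<delta> \<gamma> k t = -1 \<longleftrightarrow> t = b2"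
    by (rule strict_antimono_level_crossing[OF cont antimono t0(1,2) levels(3,4)]) blast
  note b = b1 b2
  have ends: "sin_level \<delta> \<gamma> k b1 = 1" "sin_level \<delta> \<gamma> k b2 = -1" using b at_top at_bottom by auto
  then have order: "b1 < b2" using below_top[of b2] b by auto
  have inner: "\<bar>sin_level \<delta> \<gamma> k t\<bar> < 1" if "t \<in> {b1<..<b2}" for t
    using that b below_top[of t] below[of t] at_bottom[of t] by auto
  have outer: "1 < \<bar>sin_level \<delta> \<gamma> k t\<bar>" if "t \<in> {0<..1} - {b1..b2}" for t
    using that below_top[of t] at_top[of t] below[of t] by auto
  have "{b1..b2} \<subseteq> {0<..1}" using b by auto
  then have inj: "inj_on (sin_level \<delta> \<gamma> k) {b1..b2}"
    using monotone_on_subset[OF antimono] by (simp add: strict_antimono_iff_antimono)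
  show thesis by (rule that[of b1 b2]) (use b order ends inner outer inj in auto)
qed

lemma regime_Z:
  "\<exists>b1 b2. 0 < b1 \<and> b1 < b2 \<and> b2 < 1 \<and>
        (\<forall>\<tau>. (b1 < \<tau> \<and> \<tau> < b2 \<longrightarrow> card (fibre \<delta> \<gamma> k \<tau>) = 2) \<and>
             (\<tau> = b1 \<longrightarrow> fibre \<delta> \<gamma> k \<tau> = {cis (pi/2)}) \<and>
             (\<tau> = b2 \<longrightarrow> fibre \<delta> \<gamma> k \<tau> = {cis (3*pi/2)}) \<and>
             (\<tau> \<notin> {b1..b2} \<longrightarrow> fibre \<delta> \<gamma> k \<tau> = {})) \<and>
        fold_point \<delta> \<gamma> k b1 (pi/2) \<and> supercritical \<delta> \<gamma> k b1 (pi/2) \<and>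
        fold_point \<delta> \<gamma> k b2 (3*pi/2) \<and> subcritical \<delta> \<gamma> k b2 (3*pi/2) \<and>
        simple_closed_curve (Zset \<delta> \<gamma> k) \<and> curve_noncontractible_in cyl (Zset \<delta> \<gamma> k)"
proof -
  obtain b1 b2 where b: "0 < b1" "b1 < b2" "b2 < 1"
    and inj: "inj_on (sin_level \<delta> \<gamma> k) {b1..b2}"
    and ends: "sin_level \<delta> \<gamma> k b1 = 1" "sin_level \<delta> \<gamma> k b2 = -1"
    and inner: "\<And>t. t \<in> {b1<..<b2} \<Longrightarrow> \<bar>sin_level \<delta> \<gamma> k t\<bar> < 1"
    and outer: "\<And>t. t \<in> {0<..1} - {b1..b2} \<Longrightarrow> 1 < \<bar>sin_level \<delta> \<gamma> k t\<bar>"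
    by (rule sin_level_window_beyond_Phi) blast
  have two: "card (fibre \<delta> \<gamma> k t) = 2" if "t \<in> {b1<..<b2}" for t
    using card_fibre_eq_2[OF \<gamma> k(1)] inner[OF that] that b by auto
  have top: "fibre \<delta> \<gamma> k b1 = {cis (pi/2)}" and bottom: "fibre \<delta> \<gamma> k b2 = {cis (3*pi/2)}"
    using fibre_eq_top[OF \<gamma> k(1)] fibre_eq_bottom[OF \<gamma> k(1)] ends b by auto
  have none: "fibre \<delta> \<gamma> k t = {}" if "t \<notin> {b1..b2}" for t
    by (intro fibre_eq_empty[OF \<gamma> k(1)]) (use outer[of t] that in auto)
  have folds: "fold_point \<delta> \<gamma> k b1 (pi/2)" "fold_point \<delta> \<gamma> k b2 (3*pi/2)"
    using fold_point_top[OF \<gamma> k(1)] fold_point_bottom[OF \<gamma> k(1)] ends b by auto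
  have "supercritical \<delta> \<gamma> k b1 (pi/2)"
    by (rule supercritical_if_fibres[of 0 b1 b2]) (use b two top none in auto)
  moreover have "subcritical \<delta> \<gamma> k b2 (3*pi/2)"
    by (rule subcritical_if_fibres[of b1 b2 2]) (use b two bottom none in auto)
  moreover have Z: "Zset \<delta> \<gamma> k = circle_graph {b1..b2} (sin_level \<delta> \<gamma> k)"
    using b outer by (intro Zset_eq_circle_graph_on[OF \<gamma> k(1)]) auto
  have cont: "continuous_on {b1..b2} (sin_level \<delta> \<gamma> k)"
    by (rule continuous_on_subset[OF continuous_on_sin_level[OF \<gamma> k(1)]]) (use b in auto)
  moreover have "simple_closed_curve (Zset \<delta> \<gamma> k)" "curve_noncontractible_in cyl (Zset \<delta> \<gamma> k)"
    unfolding Z using circle_graph_noncontractible_loop[OF _ _ _ cont inj] b ends inner by auto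
  moreover have "\<forall>\<tau>. (b1 < \<tau> \<and> \<tau> < b2 \<longrightarrow> card (fibre \<delta> \<gamma> k \<tau>) = 2) \<and>
      (\<tau> = b1 \<longrightarrow> fibre \<delta> \<gamma> k \<tau> = {cis (pi/2)}) \<and> (\<tau> = b2 \<longrightarrow> fibre \<delta> \<gamma> k \<tau> = {cis (3*pi/2)}) \<and>
      (\<tau> \<notin> {b1..b2} \<longrightarrow> fibre \<delta> \<gamma> k \<tau> = {})"
    using two top bottom none by auto
  ultimately show ?thesis using b folds by blast
qed

end

theorem mainTheorem3:
  fixes k \<gamma> \<delta> :: real
  assumes hk: "0 < k" "k < 1" and h\<gamma>: "0 < \<gamma>" and h\<delta>: "1 < \<delta>"
  defines "Z \<equiv> Zset \<delta> \<gamma> k" and "Fib \<equiv> fibre \<delta> \<gamma> k"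
  shows
   "(\<delta> < Phi \<and> \<gamma> > gamma_minus k \<delta> \<longrightarrow> Z = {})
  \<and> (\<delta> < Phi \<and> gamma_plus k \<delta> < \<gamma> \<and> \<gamma> < gamma_minus k \<delta> \<longrightarrow>
      (\<exists>\<tau>1 \<tau>2. 0 < \<tau>1 \<and> \<tau>1 < \<tau>2 \<and> \<tau>2 < 1 \<and>
        (\<forall>\<tau>. (\<tau>1 < \<tau> \<and> \<tau> < \<tau>2 \<longrightarrow> card (Fib \<tau>) = 2) \<and>
             (\<tau> = \<tau>1 \<or> \<tau> = \<tau>2 \<longrightarrow> Fib \<tau> = {cis (3*pi/2)}) \<and>
             (\<tau> \<notin> {\<tau>1..\<tau>2} \<longrightarrow> Fib \<tau> = {})) \<and>
        fold_point \<delta> \<gamma> k \<tau>1 (3*pi/2) \<and> supercritical \<delta> \<gamma> k \<tau>1 (3*pi/2) \<and>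
        fold_point \<delta> \<gamma> k \<tau>2 (3*pi/2) \<and> subcritical \<delta> \<gamma> k \<tau>2 (3*pi/2) \<and>
        simple_closed_curve Z \<and> curve_contractible_in cyl Z))
  \<and> (\<delta> < Phi \<and> \<gamma> < gamma_plus k \<delta> \<longrightarrow>
      (\<exists>a1 a2 a3 a4. 0 < a1 \<and> a1 < a2 \<and> a2 < a3 \<and> a3 < a4 \<and> a4 < 1 \<and>
        (\<forall>\<tau>. ((a1 < \<tau> \<and> \<tau> < a2) \<or> (a3 < \<tau> \<and> \<tau> < a4) \<longrightarrow> card (Fib \<tau>) = 2) \<and>
             (\<tau> = a1 \<longrightarrow> Fib \<tau> = {cis (3*pi/2)}) \<and>
             (\<tau> = a2 \<longrightarrow> Fib \<tau> = {cis (pi/2)}) \<and>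
             (\<tau> = a3 \<longrightarrow> Fib \<tau> = {cis (pi/2)}) \<and>
             (\<tau> = a4 \<longrightarrow> Fib \<tau> = {cis (3*pi/2)}) \<and>
             (\<tau> \<notin> {a1..a2} \<union> {a3..a4} \<longrightarrow> Fib \<tau> = {})) \<and>
        fold_point \<delta> \<gamma> k a1 (3*pi/2) \<and> supercritical \<delta> \<gamma> k a1 (3*pi/2) \<and>
        fold_point \<delta> \<gamma> k a2 (pi/2) \<and> subcritical \<delta> \<gamma> k a2 (pi/2) \<and>
        fold_point \<delta> \<gamma> k a3 (pi/2) \<and> supercritical \<delta> \<gamma> k a3 (pi/2) \<and>
        fold_point \<delta> \<gamma> k a4 (3*pi/2) \<and> subcritical \<delta> \<gamma> k a4 (3*pi/2) \<and>
        (\<exists>A B. Z = A \<union> B \<and> A \<inter> B = {} \<and>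
           simple_closed_curve A \<and> simple_closed_curve B \<and>
           curve_noncontractible_in cyl A \<and> curve_noncontractible_in cyl B)))
  \<and> (\<delta> > Phi \<longrightarrow>
      (\<exists>b1 b2. 0 < b1 \<and> b1 < b2 \<and> b2 < 1 \<and>
        (\<forall>\<tau>. (b1 < \<tau> \<and> \<tau> < b2 \<longrightarrow> card (Fib \<tau>) = 2) \<and>
             (\<tau> = b1 \<longrightarrow> Fib \<tau> = {cis (pi/2)}) \<and>
             (\<tau> = b2 \<longrightarrow> Fib \<tau> = {cis (3*pi/2)}) \<and>
             (\<tau> \<notin> {b1..b2} \<longrightarrow> Fib \<tau> = {})) \<and>
        fold_point \<delta> \<gamma> k b1 (pi/2) \<and> supercritical \<delta> \<gamma> k b1 (pi/2) \<and>
        fold_point \<delta> \<gamma> k b2 (3*pi/2) \<and> subcritical \<delta> \<gamma> k b2 (3*pi/2) \<and>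
        simple_closed_curve Z \<and> curve_noncontractible_in cyl Z))"
  unfolding Z_def Fib_def
proof (intro conjI impI; (elim conjE)?)
  show "Zset \<delta> \<gamma> k = {}" if "\<delta> < Phi" "gamma_minus k \<delta> < \<gamma>"
    using regime_W[OF hk h\<gamma> h\<delta> that] .
qed (fact regime_X[OF hk h\<gamma> h\<delta>] regime_Y[OF hk h\<gamma> h\<delta>] regime_Z[OF hk h\<gamma>])+

end
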